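(* Let $f$ and $g$ be transcendental entire functions with $f\circ g=g\circ f$, and suppose there is a polynomial $P$ of degree at least $2$ such that $P\circ f=f\circ g$. If $U\subset BU(f)$, then $g^{-1}(U)\subset BU(f)$.
   Context: For an entire function $f$, $f^n$ denotes the $n$-th iterate. The escaping set is $I(f)=\{z\in\mathbb{C}: f^n(z)\to\infty \text{ as } n\to\infty\}$, $K(f)=\{z\in\mathbb{C}: \exists R>0,\ |f^n(z)|\le R \text{ for all } n\ge 0\}$, and the Bungee set is $BU(f)=\mathbb{C}\setminus (I(f)\cup K(f))$. $g^{-1}(U)$ denotes the full preimage $\{z: g(z)\in U\}$. *)

theory Defs
  imports "HOL-Complex_Analysis.Complex_Analysis" "HOL-Computational_Algebra.Polynomial"
begin

definition entire :: "(complex \<Rightarrow> complex) \<Rightarrow> bool" where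
  "entire f \<longleftrightarrow> f holomorphic_on UNIV"

definition transcendental_entire :: "(complex \<Rightarrow> complex) \<Rightarrow> bool" where
  "transcendental_entire f \<longleftrightarrow> entire f \<and> \<not> (\<exists>p :: complex poly. \<forall>z. f z = poly p z)"

definition escaping_set :: "(complex \<Rightarrow> complex) \<Rightarrow> complex set" where
  "escaping_set f = {z. filterlim (\<lambda>n. (f ^^ n) z) at_infinity sequentially}"

definition bounded_orbit_set :: "(complex \<Rightarrow> complex) \<Rightarrow> complex set" where
  "bounded_orbit_set f = {z. \<exists>R>0. \<forall>n. norm ((f ^^ n) z) \<le> R}"

definition bungee_set :: "(complex \<Rightarrow> complex) \<Rightarrow> complex set" where
  "bungee_set f = UNIV - (escaping_set f \<union> bounded_orbit_set f)"

end

theory Submission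
  imports Defs
begin

text \<open>
  The relation \<open>f \<circ> g = g \<circ> f\<close> gives \<open>f\<^sup>n\<^sup>+\<^sup>1 \<circ> g = f \<circ> g \<circ> f\<^sup>n = P \<circ> f\<^sup>n\<^sup>+\<^sup>1\<close>, so the
  \<open>f\<close>-orbit of \<open>g z\<close> is, from the first step on, the image of the \<open>f\<close>-orbit of \<open>z\<close>
  under the polynomial \<open>P\<close>. A continuous map sends bounded sequences to bounded ones, and a
  non-constant polynomial sends sequences tending to \<open>\<infinity>\<close> to sequences tending to \<open>\<infinity>\<close>. Hence
  \<open>z \<in> K(f)\<close> forces \<open>g z \<in> K(f)\<close> and \<open>z \<in> I(f)\<close> forces \<open>g z \<in> I(f)\<close>; so \<open>g z \<in> BU(f)\<close>
  implies \<open>z \<in> BU(f)\<close>.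
\<close>

lemma bounded_orbit_set_eq_Bseq: "bounded_orbit_set f = {z. Bseq (\<lambda>n. (f ^^ n) z)}"
  by (simp add: bounded_orbit_set_def Bseq_def)

lemma Bseq_continuous_image:
  fixes X :: "nat \<Rightarrow> 'a::euclidean_space" and h :: "'a \<Rightarrow> 'b::real_normed_vector"
  assumes "continuous_on UNIV h" and "Bseq X"
  shows "Bseq (\<lambda>n. h (X n))"
proof -
  obtain R where "\<And>n. norm (X n) \<le> R"
    using \<open>Bseq X\<close> by (auto simp: Bseq_def)
  then have "range (\<lambda>n. h (X n)) \<subseteq> h ` cball 0 R"
    by auto
  moreover have "bounded (h ` cball 0 R)"
    using assms(1) by (intro compact_imp_bounded compact_continuous_image)
      (auto intro: continuous_on_subset)
  ultimately show ?thesis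
    by (simp add: Bseq_eq_bounded bounded_subset)
qed

lemma escaping_set_transfer:
  assumes "filterlim h at_infinity at_infinity"
    and "eventually (\<lambda>n. (f ^^ n) w = h ((f ^^ n) z)) sequentially"
    and "z \<in> escaping_set f"
  shows "w \<in> escaping_set f"
proof -
  have "filterlim (\<lambda>n. h ((f ^^ n) z)) at_infinity sequentially"
    using assms(1,3) by (auto simp: escaping_set_def intro: filterlim_compose)
  then show ?thesis
    using filterlim_cong[OF refl refl assms(2)] by (simp add: escaping_set_def)
qed

lemma bounded_orbit_set_transfer:
  assumes "continuous_on UNIV h"
    and "eventually (\<lambda>n. (f ^^ n) w = h ((f ^^ n) z)) sequentially"
    and "z \<in> bounded_orbit_set f"
  shows "w \<in> bounded_orbit_set f"
proof -
  have "Bseq (\<lambda>n. h ((f ^^ n) z))"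
    using Bseq_continuous_image[OF assms(1)] assms(3) by (simp add: bounded_orbit_set_eq_Bseq)
  moreover have "eventually (\<lambda>n. norm ((f ^^ n) w) \<le> norm (h ((f ^^ n) z))) sequentially"
    using assms(2) by eventually_elim simp
  ultimately show ?thesis
    by (simp add: bounded_orbit_set_eq_Bseq Bseq_eventually_mono)
qed

lemma bungee_set_transfer:
  assumes "continuous_on UNIV h" and "filterlim h at_infinity at_infinity"
    and "eventually (\<lambda>n. (f ^^ n) w = h ((f ^^ n) z)) sequentially"
    and "w \<in> bungee_set f"
  shows "z \<in> bungee_set f"
proof -
  have "z \<notin> escaping_set f"
    using escaping_set_transfer[OF assms(2,3)] assms(4) by (auto simp: bungee_set_def)
  moreover have "z \<notin> bounded_orbit_set f"
    using bounded_orbit_set_transfer[OF assms(1,3)] assms(4) by (auto simp: bungee_set_def)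
  ultimately show ?thesis
    by (simp add: bungee_set_def)
qed

lemma funpow_commute_apply:
  assumes "f \<circ> g = g \<circ> f"
  shows "(f ^^ n) (g z) = g ((f ^^ n) z)"
proof (induction n)
  case (Suc n)
  then show ?case
    using assms by (simp add: fun_eq_iff)
qed simp

lemma funpow_Suc_semiconj_apply:
  assumes "f \<circ> g = g \<circ> f" and "p \<circ> f = f \<circ> g"
  shows "(f ^^ Suc n) (g z) = p ((f ^^ Suc n) z)"
proof -
  have "(f ^^ Suc n) (g z) = f (g ((f ^^ n) z))"
    using funpow_commute_apply[OF assms(1)] by simp
  also have "\<dots> = p ((f ^^ Suc n) z)"
    using assms(2) by (simp add: fun_eq_iff)
  finally show ?thesis .
qed

theorem theorem5:
  fixes f g :: "complex \<Rightarrow> complex" and P :: "complex poly" and U :: "complex set"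
  assumes "transcendental_entire f" and "transcendental_entire g"
    and "f \<circ> g = g \<circ> f"
    and "degree P \<ge> 2"
    and "poly P \<circ> f = f \<circ> g"
    and "U \<subseteq> bungee_set f"
  shows "g -` U \<subseteq> bungee_set f"
proof
  fix z
  assume "z \<in> g -` U"
  then have "g z \<in> bungee_set f"
    using assms(6) by auto
  moreover have "eventually (\<lambda>n. (f ^^ n) (g z) = poly P ((f ^^ n) z)) sequentially"
  proof (rule eventually_sequentiallyI)
    show "(f ^^ n) (g z) = poly P ((f ^^ n) z)" if "n \<ge> 1" for n
      using funpow_Suc_semiconj_apply[OF assms(3,5), of "n - 1"] that by simp
  qed
  moreover have "filterlim (poly P) at_infinity at_infinity"
    using assms(4) by (intro filterlim_poly_at_infinity) simp
  moreover have "continuous_on UNIV (poly P)"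
    by (intro continuous_intros)
  ultimately show "z \<in> bungee_set f"
    using bungee_set_transfer by blast
qed

end
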